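(* In the setting where $A,B$ are strongly regular graphs with the same parameters, $A',B'$ are obtained by individualizing one port vertex each, $G=G(A',B')$ and $H=G(A',A')$: let $x\in V(G)$ lie in the part $C\in\{A,B\}$ of $G$ and $y\in V(H)$ lie in a part $D$ of $H$ (one of the two copies of $A$). Let $C'_x$ denote $C$ with its port vertex individualized and $x$ additionally individualized (with a different color), and similarly $D'_y$. If $\mathrm{WL}_1(C'_x)\ne\mathrm{WL}_1(D'_y)$, then $\mathrm{WL}_1(G_x)\ne\mathrm{WL}_1(H_y)$.
   Context: Graphs are finite, simple and undirected. A strongly regular graph with parameters $(n,d,\lambda,\mu)$ is an $n$-vertex $d$-regular graph in which any two adjacent vertices have $\lambda$ common neighbours and any two distinct non-adjacent vertices have $\mu$ common neighbours. $A'$ ($B'$) is $A$ ($B$) with a single port vertex $a_1$ ($b_1$) colored $1$ and others uncolored. $G(A',B')$ (uncolored) is the vertex-disjoint union of $A$ and $B$ plus a connecting vertex $c_1$ adjacent to $a_1$ and $b_1$ and a pendant vertex adjacent only to $c_1$; $H=G(A',A')$ uses two disjoint copies of $A'$. Color refinement on a vertex-colored $N$-vertex graph $X$: $C^0(x)$ is the color of $x$ (common default for uncolored vertices), $C^{r+1}(x)=\big(C^r(x),\{\!\{C^r(y)\}\!\}_{y\in N(x)}\big)$ ($\{\!\{\cdot\}\!\}$ = multiset), $\mathrm{WL}_1(X)=\{\!\{C^N(x)\}\!\}_{x}$. $G_x$ is $G$ with vertex $x$ given a special new color (the same special color for all choices of $x$). *)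

theory Defs
  imports Main "HOL-Library.Multiset"
begin

definition simple_graph :: "'a set \<Rightarrow> ('a \<Rightarrow> 'a \<Rightarrow> bool) \<Rightarrow> bool" where
  "simple_graph V E \<longleftrightarrow> finite V \<and> (\<forall>u v. E u v \<longrightarrow> E v u) \<and> (\<forall>v. \<not> E v v)
     \<and> (\<forall>u v. E u v \<longrightarrow> u \<in> V \<and> v \<in> V)"

definition nbrs :: "'a set \<Rightarrow> ('a \<Rightarrow> 'a \<Rightarrow> bool) \<Rightarrow> 'a \<Rightarrow> 'a set" where
  "nbrs V E x = {y \<in> V. E x y}"

definition strongly_regular ::
  "'a set \<Rightarrow> ('a \<Rightarrow> 'a \<Rightarrow> bool) \<Rightarrow> nat \<Rightarrow> nat \<Rightarrow> nat \<Rightarrow> nat \<Rightarrow> bool" where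
  "strongly_regular V E n d lam mu \<longleftrightarrow> simple_graph V E \<and> card V = n
     \<and> (\<forall>v\<in>V. card (nbrs V E v) = d)
     \<and> (\<forall>u\<in>V. \<forall>v\<in>V. E u v \<longrightarrow> card (nbrs V E u \<inter> nbrs V E v) = lam)
     \<and> (\<forall>u\<in>V. \<forall>v\<in>V. u \<noteq> v \<longrightarrow> \<not> E u v \<longrightarrow> card (nbrs V E u \<inter> nbrs V E v) = mu)"

datatype clr = Default | Port | Special

datatype 'c crcol = Base 'c | Ref "'c crcol" "'c crcol multiset"

fun cr :: "'a set \<Rightarrow> ('a \<Rightarrow> 'a \<Rightarrow> bool) \<Rightarrow> ('a \<Rightarrow> 'c) \<Rightarrow> nat \<Rightarrow> 'a \<Rightarrow> 'c crcol" where
  "cr V E col 0 x = Base (col x)"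
| "cr V E col (Suc r) x = Ref (cr V E col r x) (image_mset (cr V E col r) (mset_set (nbrs V E x)))"

definition WL1 :: "'a set \<Rightarrow> ('a \<Rightarrow> 'a \<Rightarrow> bool) \<Rightarrow> ('a \<Rightarrow> 'c) \<Rightarrow> 'c crcol multiset" where
  "WL1 V E col = image_mset (cr V E col (card V)) (mset_set V)"

datatype 'a gv = L 'a | R 'a | Conn | Pend

definition gadgetV :: "'a set \<Rightarrow> 'a set \<Rightarrow> 'a gv set" where
  "gadgetV VA VB = L ` VA \<union> R ` VB \<union> {Conn, Pend}"

fun gadgetE0 :: "('a \<Rightarrow> 'a \<Rightarrow> bool) \<Rightarrow> 'a \<Rightarrow> ('a \<Rightarrow> 'a \<Rightarrow> bool) \<Rightarrow> 'a \<Rightarrow> 'a gv \<Rightarrow> 'a gv \<Rightarrow> bool" where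
  "gadgetE0 EA a1 EB b1 (L u) (L v) = EA u v"
| "gadgetE0 EA a1 EB b1 (R u) (R v) = EB u v"
| "gadgetE0 EA a1 EB b1 Conn (L u) = (u = a1)"
| "gadgetE0 EA a1 EB b1 Conn (R u) = (u = b1)"
| "gadgetE0 EA a1 EB b1 Conn Pend = True"
| "gadgetE0 EA a1 EB b1 _ _ = False"

definition gadgetE :: "('a \<Rightarrow> 'a \<Rightarrow> bool) \<Rightarrow> 'a \<Rightarrow> ('a \<Rightarrow> 'a \<Rightarrow> bool) \<Rightarrow> 'a \<Rightarrow> 'a gv \<Rightarrow> 'a gv \<Rightarrow> bool" where
  "gadgetE EA a1 EB b1 u v \<longleftrightarrow> gadgetE0 EA a1 EB b1 u v \<or> gadgetE0 EA a1 EB b1 v u"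

text \<open>G_x: the uncoloured graph with x given the special colour.\<close>
definition indiv :: "'v \<Rightarrow> 'v \<Rightarrow> clr" where
  "indiv x = (\<lambda>v. if v = x then Special else Default)"

text \<open>C'_x: port vertex p coloured 1 and x additionally given the special colour.\<close>
definition indiv_port :: "'v \<Rightarrow> 'v \<Rightarrow> 'v \<Rightarrow> clr" where
  "indiv_port p x = (\<lambda>v. if v = x then Special else if v = p then Port else Default)"

end

theory Submission
  imports Defs
begin

text \<open>Suppose WL1 does not distinguish G_x from H_y. Delete the connecting and the pendant
vertex: what remains is the disjoint union of the two parts, with the ports coloured to
remember their lost neighbour. The gadget colouring after r + 2 rounds determines this
parts colouring after r rounds, because the connecting vertex is recognised after two
rounds (degree 3 with a neighbour of degree 1), so the multisets of parts colours of G and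
H agree. The part not containing the individualised vertex is a strongly regular graph with
one port; there colour refinement only sees whether a vertex is the port, a neighbour of
it or neither, so its colour multiset depends on the parameters alone and cancels. What is
left is WL1(C'_x) = WL1(D'_y).\<close>

lemma cr_eq_downward:
  assumes "m \<le> M" and "cr V E c M v = cr V' E' c' M v'"
  shows "cr V E c m v = cr V' E' c' m v'"
proof -
  obtain k where M: "M = k + m" using assms(1) le_Suc_ex by (metis add.commute)
  show ?thesis using assms(2) unfolding M by (induction k) auto
qed

lemma cr_eq_imp_colour_eq: "cr V E c M v = cr V' E' c' M v' \<Longrightarrow> c v = c' v'"
  using cr_eq_downward[of 0 M] by fastforce

fun crcol_degree :: "'c crcol \<Rightarrow> nat" where
  "crcol_degree (Base c) = 0"
| "crcol_degree (Ref a M) = size M"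

lemma crcol_degree_cr_Suc [simp]: "crcol_degree (cr V E c (Suc r) v) = card (nbrs V E v)"
  by simp

lemma cr_eq_imp_degree_eq:
  assumes "1 \<le> M" and "cr V E c M v = cr V' E' c' M v'"
  shows "card (nbrs V E v) = card (nbrs V' E' v')"
  using cr_eq_downward[OF assms] crcol_degree_cr_Suc by (metis One_nat_def)

lemma cr_eq_imp_nbr_degrees_eq:
  assumes "2 \<le> M" and "cr V E c M v = cr V' E' c' M v'"
  shows "image_mset (\<lambda>u. card (nbrs V E u)) (mset_set (nbrs V E v))
       = image_mset (\<lambda>u. card (nbrs V' E' u)) (mset_set (nbrs V' E' v'))"
proof -
  have "cr V E c (Suc (Suc 0)) v = cr V' E' c' (Suc (Suc 0)) v'"
    by (rule cr_eq_downward[OF _ assms(2)]) (use assms(1) in simp)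
  hence "image_mset (cr V E c (Suc 0)) (mset_set (nbrs V E v))
       = image_mset (cr V' E' c' (Suc 0)) (mset_set (nbrs V' E' v'))"
    by (simp only: cr.simps(2)) simp
  hence "image_mset crcol_degree (image_mset (cr V E c (Suc 0)) (mset_set (nbrs V E v)))
       = image_mset crcol_degree (image_mset (cr V' E' c' (Suc 0)) (mset_set (nbrs V' E' v')))"
    by simp
  thus ?thesis by (simp add: image_mset.compositionality comp_def del: cr.simps)
qed

lemma cr_embedding:
  assumes "inj f" and "finite V"
    and "\<And>v. v \<in> V \<Longrightarrow> nbrs V' E' (f v) = f ` nbrs V E v"
    and "\<And>v. v \<in> V \<Longrightarrow> c' (f v) = c v"
  shows "v \<in> V \<Longrightarrow> cr V' E' c' r (f v) = cr V E c r v"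
proof (induction r arbitrary: v)
  case 0
  thus ?case using assms(4) by simp
next
  case (Suc r)
  have fin: "finite (nbrs V E v)" using assms(2) unfolding nbrs_def by simp
  have "image_mset (cr V' E' c' r) (mset_set (nbrs V' E' (f v)))
      = image_mset (cr V' E' c' r) (image_mset f (mset_set (nbrs V E v)))"
    using assms(1,3) Suc.prems by (simp add: image_mset_mset_set inj_on_def inj_def)
  also have "\<dots> = image_mset (cr V E c r) (mset_set (nbrs V E v))"
    by (simp add: image_mset.compositionality)
      (rule image_mset_cong, use fin Suc.IH in \<open>auto simp: nbrs_def\<close>)
  finally show ?case using Suc by simp
qed

lemma image_mset_eq_if_refines:
  assumes fin: "finite S1" "finite S2"
    and eq: "image_mset f1 (mset_set S1) = image_mset f2 (mset_set S2)"
    and r11: "\<And>a b. a \<in> S1 \<Longrightarrow> b \<in> S1 \<Longrightarrow> f1 a = f1 b \<Longrightarrow> g1 a = g1 b"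
    and r12: "\<And>a b. a \<in> S1 \<Longrightarrow> b \<in> S2 \<Longrightarrow> f1 a = f2 b \<Longrightarrow> g1 a = g2 b"
    and r22: "\<And>a b. a \<in> S2 \<Longrightarrow> b \<in> S2 \<Longrightarrow> f2 a = f2 b \<Longrightarrow> g2 a = g2 b"
  shows "image_mset g1 (mset_set S1) = image_mset g2 (mset_set S2)"
proof -
  define \<Phi> where "\<Phi> c = (if \<exists>a\<in>S1. f1 a = c then g1 (SOME a. a \<in> S1 \<and> f1 a = c)
                          else g2 (SOME b. b \<in> S2 \<and> f2 b = c))" for c
  have \<Phi>1: "g1 a = \<Phi> (f1 a)" if a: "a \<in> S1" for a
  proof -
    define a0 where "a0 = (SOME a'. a' \<in> S1 \<and> f1 a' = f1 a)"
    have "a0 \<in> S1 \<and> f1 a0 = f1 a" unfolding a0_def by (rule someI[of _ a]) (simp add: a)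
    hence "g1 a0 = g1 a" using r11 a by blast
    moreover have "\<Phi> (f1 a) = g1 a0" unfolding \<Phi>_def a0_def using a by auto
    ultimately show ?thesis by simp
  qed
  have \<Phi>2: "g2 b = \<Phi> (f2 b)" if b: "b \<in> S2" for b
  proof (cases "\<exists>a\<in>S1. f1 a = f2 b")
    case True
    then obtain a where a: "a \<in> S1" "f1 a = f2 b" by blast
    define a0 where "a0 = (SOME a'. a' \<in> S1 \<and> f1 a' = f2 b)"
    have "a0 \<in> S1 \<and> f1 a0 = f2 b" unfolding a0_def by (rule someI[of _ a]) (simp add: a)
    hence "g1 a0 = g2 b" using r12 b by blast
    moreover have "\<Phi> (f2 b) = g1 a0" unfolding \<Phi>_def a0_def using True by simp
    ultimately show ?thesis by simp
  next
    case False
    define b0 where "b0 = (SOME b'. b' \<in> S2 \<and> f2 b' = f2 b)"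
    have "b0 \<in> S2 \<and> f2 b0 = f2 b" unfolding b0_def by (rule someI[of _ b]) (simp add: b)
    hence "g2 b0 = g2 b" using r22 b by blast
    moreover have "\<Phi> (f2 b) = g2 b0" unfolding \<Phi>_def b0_def using False by simp
    ultimately show ?thesis by simp
  qed
  have "image_mset g1 (mset_set S1) = image_mset \<Phi> (image_mset f1 (mset_set S1))"
    by (simp add: image_mset.compositionality) (rule image_mset_cong, simp add: \<Phi>1 fin)
  also have "\<dots> = image_mset \<Phi> (image_mset f2 (mset_set S2))" using eq by simp
  also have "\<dots> = image_mset g2 (mset_set S2)"
    by (simp add: image_mset.compositionality) (rule image_mset_cong, simp add: \<Phi>2 fin)
  finally show ?thesis .
qed

lemma image_mset_the_filter_partial:
  assumes "finite S"
  shows "image_mset the (filter_mset (\<lambda>ob. ob \<noteq> None)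
           (image_mset (\<lambda>u. if u \<in> P then Some (h u) else None) (mset_set S)))
       = image_mset h (mset_set (S \<inter> P))"
proof -
  have "{u \<in> S. (if u \<in> P then Some (h u) else None) \<noteq> None} = S \<inter> P" by auto
  hence "filter_mset (\<lambda>ob. ob \<noteq> None) (image_mset (\<lambda>u. if u \<in> P then Some (h u) else None) (mset_set S))
       = image_mset (\<lambda>u. if u \<in> P then Some (h u) else None) (mset_set (S \<inter> P))"
    using assms by (simp only: filter_mset_image_mset filter_mset_mset_set)
  thus ?thesis
    by (simp add: image_mset.compositionality) (rule image_mset_cong, use assms in auto)
qed

lemma image_mset_mset_set_const:
  "finite S \<Longrightarrow> (\<And>x. x \<in> S \<Longrightarrow> h x = c) \<Longrightarrow> image_mset h (mset_set S) = replicate_mset (card S) c"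
  using image_mset_cong[of "mset_set S" h "\<lambda>_. c"] by (simp add: image_mset_const_eq)

lemma mset_set_three_way:
  assumes "finite S"
  shows "mset_set S = mset_set {x \<in> S. P x} + mset_set {x \<in> S. \<not> P x \<and> Q x} + mset_set {x \<in> S. \<not> P x \<and> \<not> Q x}"
proof -
  let ?A = "{x \<in> S. P x}" and ?B = "{x \<in> S. \<not> P x \<and> Q x}" and ?C = "{x \<in> S. \<not> P x \<and> \<not> Q x}"
  have S: "S = ?A \<union> ?B \<union> ?C" by auto
  have "mset_set (?A \<union> ?B \<union> ?C) = mset_set (?A \<union> ?B) + mset_set ?C"
    by (rule mset_set_Union) (use assms in auto)
  moreover have "mset_set (?A \<union> ?B) = mset_set ?A + mset_set ?B"
    by (rule mset_set_Union) (use assms in auto)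
  ultimately have "mset_set (?A \<union> ?B \<union> ?C) = mset_set ?A + mset_set ?B + mset_set ?C" by (simp only:)
  thus ?thesis unfolding S[symmetric] .
qed

lemma card_three_way:
  assumes "finite S"
  shows "card S = card {x \<in> S. P x} + card {x \<in> S. \<not> P x \<and> Q x} + card {x \<in> S. \<not> P x \<and> \<not> Q x}"
  using arg_cong[where f = size, OF mset_set_three_way[OF assms, of P Q]] by (simp only: size_union size_mset_set)

lemma image_mset_mset_set_three_valued:
  assumes fin: "finite S" and h: "\<And>x. x \<in> S \<Longrightarrow> h x = (if P x then c0 else if Q x then c1 else c2)"
  shows "image_mset h (mset_set S) = replicate_mset (card {x \<in> S. P x}) c0
     + replicate_mset (card {x \<in> S. \<not> P x \<and> Q x}) c1 + replicate_mset (card {x \<in> S. \<not> P x \<and> \<not> Q x}) c2"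
proof -
  have "image_mset h (mset_set {x \<in> S. P x}) = replicate_mset (card {x \<in> S. P x}) c0"
    and "image_mset h (mset_set {x \<in> S. \<not> P x \<and> Q x}) = replicate_mset (card {x \<in> S. \<not> P x \<and> Q x}) c1"
    and "image_mset h (mset_set {x \<in> S. \<not> P x \<and> \<not> Q x}) = replicate_mset (card {x \<in> S. \<not> P x \<and> \<not> Q x}) c2"
    by (rule image_mset_mset_set_const; use fin h in simp)+
  thus ?thesis by (simp add: mset_set_three_way[OF fin, of P Q])
qed

section \<open>Strongly regular graphs with one port\<close>

definition port_colour :: "'a \<Rightarrow> 'a \<Rightarrow> clr" where
  "port_colour p v = (if v = p then Port else Default)"

definition port_type :: "'a \<Rightarrow> ('a \<Rightarrow> 'a \<Rightarrow> bool) \<Rightarrow> 'a \<Rightarrow> nat" where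
  "port_type p E v = (if v = p then 0 else if E p v then 1 else 2)"

fun srg_port_colour :: "nat \<Rightarrow> nat \<Rightarrow> nat \<Rightarrow> nat \<Rightarrow> nat \<Rightarrow> clr crcol" where
  "srg_port_colour d lam mu 0 t = Base (if t = 0 then Port else Default)"
| "srg_port_colour d lam mu (Suc r) t = Ref (srg_port_colour d lam mu r t)
     (if t = 0 then replicate_mset d (srg_port_colour d lam mu r 1)
      else if t = 1 then {#srg_port_colour d lam mu r 0#} + replicate_mset lam (srg_port_colour d lam mu r 1)
                         + replicate_mset (d - 1 - lam) (srg_port_colour d lam mu r 2)
      else replicate_mset mu (srg_port_colour d lam mu r 1) + replicate_mset (d - mu) (srg_port_colour d lam mu r 2))"

lemma simple_graph_sym: "simple_graph V E \<Longrightarrow> E a b \<Longrightarrow> E b a"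
  unfolding simple_graph_def by blast

lemma simple_graph_irrefl: "simple_graph V E \<Longrightarrow> \<not> E a a"
  unfolding simple_graph_def by blast

lemma simple_graph_edge_in: "simple_graph V E \<Longrightarrow> E a b \<Longrightarrow> a \<in> V \<and> b \<in> V"
  unfolding simple_graph_def by blast

lemma simple_graph_finite: "simple_graph V E \<Longrightarrow> finite V"
  unfolding simple_graph_def by blast

lemma finite_nbrs: "finite V \<Longrightarrow> finite (nbrs V E a)"
  unfolding nbrs_def by simp

lemma nbrs_subset: "nbrs V E a \<subseteq> V"
  unfolding nbrs_def by auto

lemma nbrs_Int_subset: "P \<subseteq> V \<Longrightarrow> nbrs V E a \<inter> P = nbrs P E a"
  unfolding nbrs_def by auto

lemma srg_nbrs_port_type_mset:
  assumes srg: "strongly_regular V E n d lam mu" and p: "p \<in> V" and v: "v \<in> V"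
  shows "image_mset (port_type p E) (mset_set (nbrs V E v))
       = (if port_type p E v = 0 then replicate_mset d 1
          else if port_type p E v = 1 then {#0#} + replicate_mset lam 1 + replicate_mset (d - 1 - lam) 2
          else replicate_mset mu 1 + replicate_mset (d - mu) 2)"
proof -
  have sg: "simple_graph V E" and deg: "card (nbrs V E v) = d"
    and lam: "E p v \<Longrightarrow> card (nbrs V E v \<inter> nbrs V E p) = lam"
    and mu: "v \<noteq> p \<Longrightarrow> \<not> E p v \<Longrightarrow> card (nbrs V E v \<inter> nbrs V E p) = mu"
    using srg p v simple_graph_sym unfolding strongly_regular_def by metis+
  let ?N = "nbrs V E v"
  have fin: "finite ?N" using finite_nbrs[OF simple_graph_finite[OF sg]] .
  have cardN: "card ?N = card {x \<in> ?N. x = p} + card {x \<in> ?N. x \<noteq> p \<and> E p x} + card {x \<in> ?N. x \<noteq> p \<and> \<not> E p x}"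
    using card_three_way[OF fin, of "\<lambda>x. x = p" "E p"] by simp
  have common: "{x \<in> ?N. x \<noteq> p \<and> E p x} = ?N \<inter> nbrs V E p"
    using simple_graph_irrefl[OF sg] by (auto simp: nbrs_def)
  have types: "image_mset (port_type p E) (mset_set ?N)
      = replicate_mset (card {x \<in> ?N. x = p}) 0 + replicate_mset (card {x \<in> ?N. x \<noteq> p \<and> E p x}) 1
        + replicate_mset (card {x \<in> ?N. x \<noteq> p \<and> \<not> E p x}) 2"
    by (rule image_mset_mset_set_three_valued[OF fin]) (simp add: port_type_def)
  consider "v = p" | "v \<noteq> p" "E p v" | "v \<noteq> p" "\<not> E p v" by blast
  thus ?thesis
  proof cases
    case 1
    have c0: "card {x \<in> ?N. x = p} = 0" using 1 simple_graph_irrefl[OF sg] by (simp add: nbrs_def)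
    have c1: "card {x \<in> ?N. x \<noteq> p \<and> E p x} = d" using 1 common deg by simp
    have c2: "card {x \<in> ?N. x \<noteq> p \<and> \<not> E p x} = 0" using cardN c0 c1 deg by simp
    show ?thesis unfolding types c0 c1 c2 using 1 by (simp add: port_type_def)
  next
    case 2
    have "{x \<in> ?N. x = p} = {p}" using 2 p simple_graph_sym[OF sg] by (auto simp: nbrs_def)
    hence c0: "card {x \<in> ?N. x = p} = 1" by simp
    have c1: "card {x \<in> ?N. x \<noteq> p \<and> E p x} = lam" unfolding common using lam 2 by blast
    have c2: "card {x \<in> ?N. x \<noteq> p \<and> \<not> E p x} = d - 1 - lam" using cardN c0 c1 deg by simp
    show ?thesis unfolding types c0 c1 c2 using 2 by (simp add: port_type_def)
  next
    case 3
    have c0: "card {x \<in> ?N. x = p} = 0" using 3 simple_graph_sym[OF sg] by (auto simp: nbrs_def)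
    have c1: "card {x \<in> ?N. x \<noteq> p \<and> E p x} = mu" unfolding common using mu 3 by blast
    have c2: "card {x \<in> ?N. x \<noteq> p \<and> \<not> E p x} = d - mu" using cardN c0 c1 deg by simp
    show ?thesis unfolding types c0 c1 c2 using 3 by (simp add: port_type_def)
  qed
qed

lemma srg_port_type_mset:
  assumes srg: "strongly_regular V E n d lam mu" and p: "p \<in> V"
  shows "image_mset (port_type p E) (mset_set V) = {#0#} + replicate_mset d 1 + replicate_mset (n - 1 - d) 2"
proof -
  have sg: "simple_graph V E" and deg: "card (nbrs V E p) = d" and cV: "card V = n"
    using srg p unfolding strongly_regular_def by auto
  have fin: "finite V" using simple_graph_finite[OF sg] .
  have "{x \<in> V. x = p} = {p}" using p by auto
  hence c0: "card {x \<in> V. x = p} = 1" by simp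
  have "{x \<in> V. x \<noteq> p \<and> E p x} = nbrs V E p"
    using simple_graph_irrefl[OF sg] by (auto simp: nbrs_def)
  hence c1: "card {x \<in> V. x \<noteq> p \<and> E p x} = d" using deg by simp
  have c2: "card {x \<in> V. x \<noteq> p \<and> \<not> E p x} = n - 1 - d"
    using card_three_way[OF fin, of "\<lambda>x. x = p" "E p"] c0 c1 cV by simp
  have "image_mset (port_type p E) (mset_set V)
      = replicate_mset (card {x \<in> V. x = p}) 0 + replicate_mset (card {x \<in> V. x \<noteq> p \<and> E p x}) 1
        + replicate_mset (card {x \<in> V. x \<noteq> p \<and> \<not> E p x}) 2"
    by (rule image_mset_mset_set_three_valued[OF fin]) (simp add: port_type_def)
  thus ?thesis unfolding c0 c1 c2 by simp
qed

lemma srg_cr_port_type: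
  assumes srg: "strongly_regular V E n d lam mu" and p: "p \<in> V"
  shows "v \<in> V \<Longrightarrow> cr V E (port_colour p) r v = srg_port_colour d lam mu r (port_type p E v)"
proof (induction r arbitrary: v)
  case 0
  thus ?case by (simp add: port_colour_def port_type_def)
next
  case (Suc r)
  have "simple_graph V E" using srg unfolding strongly_regular_def by blast
  hence fin: "finite (nbrs V E v)" by (intro finite_nbrs simple_graph_finite)
  have "image_mset (cr V E (port_colour p) r) (mset_set (nbrs V E v))
      = image_mset (srg_port_colour d lam mu r) (image_mset (port_type p E) (mset_set (nbrs V E v)))"
    by (simp add: image_mset.compositionality)
      (rule image_mset_cong, use fin Suc.IH in \<open>auto dest: subsetD[OF nbrs_subset]\<close>)
  thus ?case using Suc.IH[OF Suc.prems] by (simp add: srg_nbrs_port_type_mset[OF srg p Suc.prems])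
qed

lemma srg_cr_port_mset:
  assumes srg: "strongly_regular V E n d lam mu" and p: "p \<in> V"
  shows "image_mset (cr V E (port_colour p) r) (mset_set V) = {#srg_port_colour d lam mu r 0#}
     + replicate_mset d (srg_port_colour d lam mu r 1) + replicate_mset (n - 1 - d) (srg_port_colour d lam mu r 2)"
proof -
  have fin: "finite V" using srg unfolding strongly_regular_def simple_graph_def by blast
  have "image_mset (cr V E (port_colour p) r) (mset_set V)
      = image_mset (srg_port_colour d lam mu r) (image_mset (port_type p E) (mset_set V))"
    by (simp add: image_mset.compositionality) (rule image_mset_cong, simp add: fin srg_cr_port_type[OF srg p])
  thus ?thesis by (simp add: srg_port_type_mset[OF srg p])
qed

section \<open>The gadget\<close>

definition gadget_parts :: "'a set \<Rightarrow> 'a set \<Rightarrow> 'a gv set" where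
  "gadget_parts V1 V2 = L ` V1 \<union> R ` V2"

definition is_port :: "'a \<Rightarrow> 'a \<Rightarrow> 'a gv \<Rightarrow> bool" where
  "is_port p1 p2 v \<longleftrightarrow> v = L p1 \<or> v = R p2"

definition regular_gadget ::
  "nat \<Rightarrow> 'a set \<Rightarrow> ('a \<Rightarrow> 'a \<Rightarrow> bool) \<Rightarrow> 'a \<Rightarrow>
    'a set \<Rightarrow> ('a \<Rightarrow> 'a \<Rightarrow> bool) \<Rightarrow> 'a \<Rightarrow> 'a gv \<Rightarrow> bool" where
  "regular_gadget d V1 E1 p1 V2 E2 p2 z \<longleftrightarrow> simple_graph V1 E1 \<and> simple_graph V2 E2
     \<and> (\<forall>v\<in>V1. card (nbrs V1 E1 v) = d) \<and> (\<forall>v\<in>V2. card (nbrs V2 E2 v) = d)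
     \<and> p1 \<in> V1 \<and> p2 \<in> V2 \<and> z \<in> gadget_parts V1 V2"

text \<open>The colouring of the parts that stands in for G_z: the ports are coloured to remember
their neighbour Conn, which is not a vertex of the parts.\<close>

definition parts_colour :: "'a \<Rightarrow> 'a \<Rightarrow> 'a gv \<Rightarrow> 'a gv \<Rightarrow> clr" where
  "parts_colour p1 p2 z v = (if v = z then Special else if is_port p1 p2 v then Port else Default)"

abbreviation gadget_cr where
  "gadget_cr V1 E1 p1 V2 E2 p2 z \<equiv> cr (gadgetV V1 V2) (gadgetE E1 p1 E2 p2) (indiv z)"

abbreviation parts_cr where
  "parts_cr V1 E1 p1 V2 E2 p2 z \<equiv> cr (gadget_parts V1 V2) (gadgetE E1 p1 E2 p2) (parts_colour p1 p2 z)"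

lemma regular_gadgetD:
  assumes "regular_gadget d V1 E1 p1 V2 E2 p2 z"
  shows "simple_graph V1 E1" "simple_graph V2 E2" "\<And>v. v \<in> V1 \<Longrightarrow> card (nbrs V1 E1 v) = d"
    "\<And>v. v \<in> V2 \<Longrightarrow> card (nbrs V2 E2 v) = d" "p1 \<in> V1" "p2 \<in> V2" "z \<in> gadget_parts V1 V2"
  using assms unfolding regular_gadget_def by auto

lemma gadgetE_L_L: "simple_graph V1 E1 \<Longrightarrow> gadgetE E1 p1 E2 p2 (L a) (L b) = E1 a b"
  unfolding gadgetE_def using simple_graph_sym by fastforce

lemma gadgetE_R_R: "simple_graph V2 E2 \<Longrightarrow> gadgetE E1 p1 E2 p2 (R a) (R b) = E2 a b"
  unfolding gadgetE_def using simple_graph_sym by fastforce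

lemma gadgetE_simps [simp]:
  "gadgetE E1 p1 E2 p2 (L a) (R b) = False" "gadgetE E1 p1 E2 p2 (R a) (L b) = False"
  "gadgetE E1 p1 E2 p2 (L a) Conn = (a = p1)" "gadgetE E1 p1 E2 p2 Conn (L a) = (a = p1)"
  "gadgetE E1 p1 E2 p2 (R a) Conn = (a = p2)" "gadgetE E1 p1 E2 p2 Conn (R a) = (a = p2)"
  "gadgetE E1 p1 E2 p2 (L a) Pend = False" "gadgetE E1 p1 E2 p2 Pend (L a) = False"
  "gadgetE E1 p1 E2 p2 (R a) Pend = False" "gadgetE E1 p1 E2 p2 Pend (R a) = False"
  "gadgetE E1 p1 E2 p2 Conn Pend = True" "gadgetE E1 p1 E2 p2 Pend Conn = True"
  "gadgetE E1 p1 E2 p2 Conn Conn = False" "gadgetE E1 p1 E2 p2 Pend Pend = False"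
  unfolding gadgetE_def by auto

lemma Conn_Pend_notin_gadget_parts [simp]: "Conn \<notin> gadget_parts V1 V2" "Pend \<notin> gadget_parts V1 V2"
  unfolding gadget_parts_def by auto

lemma gadgetV_eq: "gadgetV V1 V2 = gadget_parts V1 V2 \<union> {Conn, Pend}"
  unfolding gadget_parts_def gadgetV_def by auto

lemma gadget_parts_subset: "gadget_parts V1 V2 \<subseteq> gadgetV V1 V2"
  unfolding gadgetV_eq by auto

lemma mset_set_gadgetV:
  "finite V1 \<Longrightarrow> finite V2 \<Longrightarrow> mset_set (gadgetV V1 V2) = mset_set (gadget_parts V1 V2) + {#Conn, Pend#}"
  unfolding gadgetV_eq by (subst mset_set_Union) (auto simp: gadget_parts_def)

lemma mset_set_gadget_parts:
  "finite V1 \<Longrightarrow> finite V2 \<Longrightarrow>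
     mset_set (gadget_parts V1 V2) = image_mset L (mset_set V1) + image_mset R (mset_set V2)"
  unfolding gadget_parts_def
  by (subst mset_set_Union) (auto simp: image_mset_mset_set inj_on_def)

lemma card_gadgetV: "finite V1 \<Longrightarrow> finite V2 \<Longrightarrow> card (gadgetV V1 V2) = card V1 + card V2 + 2"
  using arg_cong[OF mset_set_gadgetV, of V1 V2 size] by (simp add: mset_set_gadget_parts)

lemma finite_gadgetV:
  assumes "regular_gadget d V1 E1 p1 V2 E2 p2 z"
  shows "finite (gadgetV V1 V2)"
  using simple_graph_finite[OF regular_gadgetD(1)[OF assms]] simple_graph_finite[OF regular_gadgetD(2)[OF assms]]
  unfolding gadgetV_def by blast

lemma finite_gadget_nbrs:
  "regular_gadget d V1 E1 p1 V2 E2 p2 z \<Longrightarrow> finite (nbrs (gadgetV V1 V2) (gadgetE E1 p1 E2 p2) v)"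
  by (rule finite_nbrs[OF finite_gadgetV])

lemma nbrs_gadget_L:
  assumes "regular_gadget d V1 E1 p1 V2 E2 p2 z"
  shows "nbrs (gadgetV V1 V2) (gadgetE E1 p1 E2 p2) (L a) = L ` nbrs V1 E1 a \<union> (if a = p1 then {Conn} else {})"
proof (rule set_eqI)
  note g = regular_gadgetD[OF assms]
  fix y show "y \<in> nbrs (gadgetV V1 V2) (gadgetE E1 p1 E2 p2) (L a) \<longleftrightarrow> y \<in> L ` nbrs V1 E1 a \<union> (if a = p1 then {Conn} else {})"
    by (cases y) (use g simple_graph_edge_in[OF g(1)] in \<open>auto simp: gadgetE_L_L[OF g(1)] nbrs_def gadgetV_def\<close>)
qed

lemma nbrs_gadget_R:
  assumes "regular_gadget d V1 E1 p1 V2 E2 p2 z"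
  shows "nbrs (gadgetV V1 V2) (gadgetE E1 p1 E2 p2) (R a) = R ` nbrs V2 E2 a \<union> (if a = p2 then {Conn} else {})"
proof (rule set_eqI)
  note g = regular_gadgetD[OF assms]
  fix y show "y \<in> nbrs (gadgetV V1 V2) (gadgetE E1 p1 E2 p2) (R a) \<longleftrightarrow> y \<in> R ` nbrs V2 E2 a \<union> (if a = p2 then {Conn} else {})"
    by (cases y) (use g simple_graph_edge_in[OF g(2)] in \<open>auto simp: gadgetE_R_R[OF g(2)] nbrs_def gadgetV_def\<close>)
qed

lemma nbrs_gadget_Conn:
  assumes "regular_gadget d V1 E1 p1 V2 E2 p2 z"
  shows "nbrs (gadgetV V1 V2) (gadgetE E1 p1 E2 p2) Conn = {L p1, R p2, Pend}"
proof (rule set_eqI)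
  fix y show "y \<in> nbrs (gadgetV V1 V2) (gadgetE E1 p1 E2 p2) Conn \<longleftrightarrow> y \<in> {L p1, R p2, Pend}"
    by (cases y) (use regular_gadgetD[OF assms] in \<open>auto simp: nbrs_def gadgetV_def\<close>)
qed

lemma nbrs_gadget_Pend: "nbrs (gadgetV V1 V2) (gadgetE E1 p1 E2 p2) Pend = {Conn}"
proof (rule set_eqI)
  fix y show "y \<in> nbrs (gadgetV V1 V2) (gadgetE E1 p1 E2 p2) Pend \<longleftrightarrow> y \<in> {Conn}"
    by (cases y) (auto simp: nbrs_def gadgetV_def)
qed

lemma nbrs_gadget_parts:
  assumes g: "regular_gadget d V1 E1 p1 V2 E2 p2 z"
  shows "nbrs (gadget_parts V1 V2) (gadgetE E1 p1 E2 p2) (L a) = L ` nbrs V1 E1 a"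
    "nbrs (gadget_parts V1 V2) (gadgetE E1 p1 E2 p2) (R a) = R ` nbrs V2 E2 a"
  unfolding nbrs_Int_subset[OF gadget_parts_subset, symmetric] nbrs_gadget_L[OF g] nbrs_gadget_R[OF g]
  by (auto simp: gadget_parts_def dest: subsetD[OF nbrs_subset])

lemma card_nbrs_gadget_Conn:
  "regular_gadget d V1 E1 p1 V2 E2 p2 z \<Longrightarrow> card (nbrs (gadgetV V1 V2) (gadgetE E1 p1 E2 p2) Conn) = 3"
  by (simp add: nbrs_gadget_Conn)

lemma card_nbrs_gadget_Pend: "card (nbrs (gadgetV V1 V2) (gadgetE E1 p1 E2 p2) Pend) = 1"
  by (simp add: nbrs_gadget_Pend)

lemma gadget_parts_cases:
  assumes "v \<in> gadget_parts V1 V2"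
  obtains a where "v = L a" "a \<in> V1" | a where "v = R a" "a \<in> V2"
  using assms unfolding gadget_parts_def by auto

lemma gadgetV_cases:
  assumes "v \<in> gadgetV V1 V2"
  obtains "v \<in> gadget_parts V1 V2" | "v = Conn" | "v = Pend"
  using assms unfolding gadgetV_eq by auto

lemma card_nbrs_gadget_part:
  assumes g: "regular_gadget d V1 E1 p1 V2 E2 p2 z" and v: "v \<in> gadget_parts V1 V2"
  shows "card (nbrs (gadgetV V1 V2) (gadgetE E1 p1 E2 p2) v) = (if is_port p1 p2 v then Suc d else d)"
proof -
  note gd = regular_gadgetD[OF g]
  have fin: "finite (nbrs V1 E1 a)" "finite (nbrs V2 E2 a)" for a
    by (simp_all add: finite_nbrs simple_graph_finite[OF gd(1)] simple_graph_finite[OF gd(2)])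
  from v show ?thesis
  proof (cases rule: gadget_parts_cases)
    case (1 a)
    have "card (L ` nbrs V1 E1 a) = d" using gd(3)[OF 1(2)] by (simp add: card_image inj_on_def)
    thus ?thesis using 1 fin by (auto simp: nbrs_gadget_L[OF g] is_port_def card_insert_if)
  next
    case (2 a)
    have "card (R ` nbrs V2 E2 a) = d" using gd(4)[OF 2(2)] by (simp add: card_image inj_on_def)
    thus ?thesis using 2 fin by (auto simp: nbrs_gadget_R[OF g] is_port_def card_insert_if)
  qed
qed

lemma nbr_of_gadget_part:
  assumes g: "regular_gadget d V1 E1 p1 V2 E2 p2 z" and v: "v \<in> gadget_parts V1 V2"
    and u: "u \<in> nbrs (gadgetV V1 V2) (gadgetE E1 p1 E2 p2) v"
  shows "u \<in> gadget_parts V1 V2 \<or> (u = Conn \<and> is_port p1 p2 v)"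
  using v u by (cases rule: gadget_parts_cases)
    (auto simp: nbrs_gadget_L[OF g] nbrs_gadget_R[OF g] gadget_parts_def is_port_def split: if_splits
      dest: subsetD[OF nbrs_subset])

lemma parts_cr_mset:
  assumes g: "regular_gadget d V1 E1 p1 V2 E2 p2 z"
  shows "image_mset (parts_cr V1 E1 p1 V2 E2 p2 z r) (mset_set (gadget_parts V1 V2))
       = image_mset (cr V1 E1 (\<lambda>a. parts_colour p1 p2 z (L a)) r) (mset_set V1)
         + image_mset (cr V2 E2 (\<lambda>a. parts_colour p1 p2 z (R a)) r) (mset_set V2)"
proof -
  note gd = regular_gadgetD[OF g]
  have fin: "finite V1" "finite V2" using gd(1,2) simple_graph_finite by auto
  have L: "parts_cr V1 E1 p1 V2 E2 p2 z r (L a) = cr V1 E1 (\<lambda>a. parts_colour p1 p2 z (L a)) r a" if "a \<in> V1" for a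
    by (rule cr_embedding[OF _ fin(1) _ _ that]) (auto simp: inj_def nbrs_gadget_parts[OF g])
  have R: "parts_cr V1 E1 p1 V2 E2 p2 z r (R a) = cr V2 E2 (\<lambda>a. parts_colour p1 p2 z (R a)) r a" if "a \<in> V2" for a
    by (rule cr_embedding[OF _ fin(2) _ _ that]) (auto simp: inj_def nbrs_gadget_parts[OF g])
  show ?thesis unfolding mset_set_gadget_parts[OF fin] image_mset_union image_mset.compositionality
    by (intro arg_cong2[where f = "(+)"] image_mset_cong) (simp_all add: L R fin)
qed

lemma parts_colour_simps:
  "parts_colour p1 p2 (L u) (L a) = indiv_port p1 u a" "parts_colour p1 p2 (L u) (R a) = port_colour p2 a"
  "parts_colour p1 p2 (R u) (L a) = port_colour p1 a" "parts_colour p1 p2 (R u) (R a) = indiv_port p2 u a"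
  by (auto simp: parts_colour_def indiv_port_def port_colour_def is_port_def)

section \<open>The gadget colouring determines the parts colouring\<close>

lemma gadget_cr_Conn_ne_part:
  assumes g1: "regular_gadget d V1 E1 p1 V2 E2 p2 z" and g2: "regular_gadget d W1 F1 q1 W2 F2 q2 z'"
    and v: "v \<in> gadget_parts W1 W2" and m: "2 \<le> m"
  shows "gadget_cr V1 E1 p1 V2 E2 p2 z m Conn \<noteq> gadget_cr W1 F1 q1 W2 F2 q2 z' m v"
proof
  let ?N2 = "nbrs (gadgetV W1 W2) (gadgetE F1 q1 F2 q2)"
  assume eq: "gadget_cr V1 E1 p1 V2 E2 p2 z m Conn = gadget_cr W1 F1 q1 W2 F2 q2 z' m v"
  have "card (?N2 v) = 3"
    using cr_eq_imp_degree_eq[OF _ eq] m card_nbrs_gadget_Conn[OF g1] by simp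
  hence d: "d = 2 \<or> d = 3" using card_nbrs_gadget_part[OF g2 v] by (auto split: if_splits)
  have "1 \<in># image_mset (\<lambda>u. card (nbrs (gadgetV V1 V2) (gadgetE E1 p1 E2 p2) u))
                         (mset_set (nbrs (gadgetV V1 V2) (gadgetE E1 p1 E2 p2) Conn))"
    by (simp add: nbrs_gadget_Conn[OF g1] nbrs_gadget_Pend)
  hence "1 \<in># image_mset (\<lambda>u. card (?N2 u)) (mset_set (?N2 v))"
    using cr_eq_imp_nbr_degrees_eq[OF m eq] by simp
  then obtain u where u: "u \<in> ?N2 v" "card (?N2 u) = 1"
    using finite_gadget_nbrs[OF g2] by auto
  from nbr_of_gadget_part[OF g2 v u(1)] show False
    using card_nbrs_gadget_part[OF g2, of u] card_nbrs_gadget_Conn[OF g2] u(2) d by (auto split: if_splits)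
qed

lemma gadget_cr_Pend_eq_part_imp:
  assumes g1: "regular_gadget d V1 E1 p1 V2 E2 p2 z" and g2: "regular_gadget d W1 F1 q1 W2 F2 q2 z'"
    and v: "v \<in> gadget_parts W1 W2" and m: "2 \<le> m"
    and eq: "gadget_cr V1 E1 p1 V2 E2 p2 z m Pend = gadget_cr W1 F1 q1 W2 F2 q2 z' m v"
  shows "d = 0" "is_port q1 q2 v" "v \<noteq> z'"
proof -
  let ?N2 = "nbrs (gadgetV W1 W2) (gadgetE F1 q1 F2 q2)"
  have "z \<noteq> Pend" using regular_gadgetD(7)[OF g1] by auto
  thus "v \<noteq> z'" using cr_eq_imp_colour_eq[OF eq] by (auto simp: indiv_def split: if_splits)
  have deg1: "card (?N2 v) = 1"
    using cr_eq_imp_degree_eq[OF _ eq] m card_nbrs_gadget_Pend[of V1 V2 E1 p1 E2 p2] by simp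
  have "3 \<in># image_mset (\<lambda>u. card (nbrs (gadgetV V1 V2) (gadgetE E1 p1 E2 p2) u))
                         (mset_set (nbrs (gadgetV V1 V2) (gadgetE E1 p1 E2 p2) Pend))"
    using card_nbrs_gadget_Conn[OF g1] by (simp add: nbrs_gadget_Pend)
  hence "3 \<in># image_mset (\<lambda>u. card (?N2 u)) (mset_set (?N2 v))"
    using cr_eq_imp_nbr_degrees_eq[OF m eq] by simp
  then obtain u where u: "u \<in> ?N2 v" "card (?N2 u) = 3"
    using finite_gadget_nbrs[OF g2] by auto
  show port: "is_port q1 q2 v"
  proof (rule ccontr)
    assume np: "\<not> is_port q1 q2 v"
    hence "d = 1" "u \<in> gadget_parts W1 W2"
      using card_nbrs_gadget_part[OF g2 v] deg1 nbr_of_gadget_part[OF g2 v u(1)] by auto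
    thus False using card_nbrs_gadget_part[OF g2, of u] u(2) by (auto split: if_splits)
  qed
  show "d = 0" using card_nbrs_gadget_part[OF g2 v] deg1 port by simp
qed

fun lone_port_colour :: "nat \<Rightarrow> clr crcol" where
  "lone_port_colour 0 = Base Port"
| "lone_port_colour (Suc r) = Ref (lone_port_colour r) {#}"

lemma parts_cr_lone_port:
  assumes g: "regular_gadget 0 V1 E1 p1 V2 E2 p2 z" and port: "is_port p1 p2 v" and "v \<noteq> z"
  shows "parts_cr V1 E1 p1 V2 E2 p2 z r v = lone_port_colour r"
proof -
  note gd = regular_gadgetD[OF g]
  have "nbrs V1 E1 p1 = {}" "nbrs V2 E2 p2 = {}"
    using gd(3)[OF gd(5)] gd(4)[OF gd(6)] finite_nbrs[OF simple_graph_finite[OF gd(1)], of E1 p1]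
      finite_nbrs[OF simple_graph_finite[OF gd(2)], of E2 p2] by auto
  hence "nbrs (gadget_parts V1 V2) (gadgetE E1 p1 E2 p2) v = {}"
    using port by (auto simp: is_port_def nbrs_gadget_parts[OF g])
  moreover have "parts_colour p1 p2 z v = Port" using port \<open>v \<noteq> z\<close> by (simp add: parts_colour_def)
  ultimately show ?thesis by (induction r) simp_all
qed

text \<open>Pend gets the colour of an isolated port of the parts: in a 0-regular gadget the
gadget colouring cannot tell Pend from a port that is not individualised.\<close>

definition parts_view ::
  "nat \<Rightarrow> 'a set \<Rightarrow> ('a \<Rightarrow> 'a \<Rightarrow> bool) \<Rightarrow> 'a \<Rightarrow>
    'a set \<Rightarrow> ('a \<Rightarrow> 'a \<Rightarrow> bool) \<Rightarrow> 'a \<Rightarrow> 'a gv \<Rightarrow> 'a gv \<Rightarrow> clr crcol option" where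
  "parts_view r V1 E1 p1 V2 E2 p2 z v =
     (if v \<in> gadget_parts V1 V2 then Some (parts_cr V1 E1 p1 V2 E2 p2 z r v)
      else if v = Pend then Some (lone_port_colour r) else None)"

lemma parts_view_eq:
  assumes g1: "regular_gadget d V1 E1 p1 V2 E2 p2 z" and g2: "regular_gadget d W1 F1 q1 W2 F2 q2 z'"
    and u: "u \<in> gadgetV V1 V2" and u': "u' \<in> gadgetV W1 W2" and m: "2 \<le> m"
    and parts: "\<And>v v'. v \<in> gadget_parts V1 V2 \<Longrightarrow> v' \<in> gadget_parts W1 W2 \<Longrightarrow>
       gadget_cr V1 E1 p1 V2 E2 p2 z m v = gadget_cr W1 F1 q1 W2 F2 q2 z' m v' \<Longrightarrow>
       parts_cr V1 E1 p1 V2 E2 p2 z r v = parts_cr W1 F1 q1 W2 F2 q2 z' r v'"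
    and eq: "gadget_cr V1 E1 p1 V2 E2 p2 z m u = gadget_cr W1 F1 q1 W2 F2 q2 z' m u'"
  shows "parts_view r V1 E1 p1 V2 E2 p2 z u = parts_view r W1 F1 q1 W2 F2 q2 z' u'"
proof -
  have deg: "card (nbrs (gadgetV V1 V2) (gadgetE E1 p1 E2 p2) u) = card (nbrs (gadgetV W1 W2) (gadgetE F1 q1 F2 q2) u')"
    using cr_eq_imp_degree_eq[OF _ eq] m by simp
  have Conn_ne_Pend:
    "card (nbrs (gadgetV V1 V2) (gadgetE E1 p1 E2 p2) Conn) \<noteq> card (nbrs (gadgetV W1 W2) (gadgetE F1 q1 F2 q2) Pend)"
    "card (nbrs (gadgetV W1 W2) (gadgetE F1 q1 F2 q2) Conn) \<noteq> card (nbrs (gadgetV V1 V2) (gadgetE E1 p1 E2 p2) Pend)"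
    by (simp_all add: nbrs_gadget_Conn[OF g1] nbrs_gadget_Conn[OF g2] nbrs_gadget_Pend)
  have lone: "parts_cr Y1 H1 t1 Y2 H2 t2 y r v = lone_port_colour r"
    if "regular_gadget d X1 G1 s1 X2 G2 s2 x" "regular_gadget d Y1 H1 t1 Y2 H2 t2 y" "v \<in> gadget_parts Y1 Y2"
      "gadget_cr X1 G1 s1 X2 G2 s2 x m Pend = gadget_cr Y1 H1 t1 Y2 H2 t2 y m v"
    for X1 G1 s1 X2 G2 s2 x Y1 H1 t1 Y2 H2 t2 y v
    using gadget_cr_Pend_eq_part_imp[OF that(1,2,3) m that(4)] parts_cr_lone_port that(2) by metis
  from u show ?thesis
  proof (cases rule: gadgetV_cases)
    case u_part: 1
    from u' show ?thesis
      by (cases rule: gadgetV_cases)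
        (use u_part parts eq gadget_cr_Conn_ne_part[OF g2 g1 u_part m] lone[OF g2 g1 u_part] in
          \<open>auto simp: parts_view_def\<close>)
  next
    case 2
    from u' show ?thesis
      by (cases rule: gadgetV_cases)
        (use 2 eq gadget_cr_Conn_ne_part[OF g1 g2 _ m] deg Conn_ne_Pend in \<open>auto simp: parts_view_def\<close>)
  next
    case 3
    from u' show ?thesis
      by (cases rule: gadgetV_cases)
        (use 3 eq lone[OF g1 g2] deg Conn_ne_Pend in \<open>auto simp: parts_view_def\<close>)
  qed
qed

text \<open>A neighbour of a part vertex is a part vertex or Conn; by gadget_cr_Conn_ne_part the
latter is never confused with a part vertex, so one refinement step on the parts can be
read off one refinement step on the gadget.\<close>

lemma gadget_cr_eq_imp_parts_cr_eq:
  "regular_gadget d (V1::'a set) E1 p1 V2 E2 p2 z \<Longrightarrow> regular_gadget d (W1::'a set) F1 q1 W2 F2 q2 z' \<Longrightarrow>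
   v \<in> gadget_parts V1 V2 \<Longrightarrow> v' \<in> gadget_parts W1 W2 \<Longrightarrow> r + 2 \<le> m \<Longrightarrow>
   gadget_cr V1 E1 p1 V2 E2 p2 z m v = gadget_cr W1 F1 q1 W2 F2 q2 z' m v' \<Longrightarrow>
   parts_cr V1 E1 p1 V2 E2 p2 z r v = parts_cr W1 F1 q1 W2 F2 q2 z' r v'"
proof (induction r arbitrary: V1 E1 p1 V2 E2 p2 z W1 F1 q1 W2 F2 q2 z' v v' m)
  case 0
  have "card (nbrs (gadgetV V1 V2) (gadgetE E1 p1 E2 p2) v) = card (nbrs (gadgetV W1 W2) (gadgetE F1 q1 F2 q2) v')"
    using cr_eq_imp_degree_eq[OF _ "0.prems"(6)] "0.prems"(5) by simp
  hence "is_port p1 p2 v = is_port q1 q2 v'"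
    using card_nbrs_gadget_part[OF "0.prems"(1,3)] card_nbrs_gadget_part[OF "0.prems"(2,4)] by (auto split: if_splits)
  thus ?case using cr_eq_imp_colour_eq[OF "0.prems"(6)] by (auto simp: parts_colour_def indiv_def split: if_splits)
next
  case (Suc r)
  note g1 = Suc.prems(1) and g2 = Suc.prems(2) and v = Suc.prems(3) and v' = Suc.prems(4)
  obtain m' where m: "m = Suc m'" "r + 2 \<le> m'" using Suc.prems(5) by (cases m) auto
  hence m2: "2 \<le> m'" by simp
  let ?S1 = "nbrs (gadgetV V1 V2) (gadgetE E1 p1 E2 p2) v"
  let ?S2 = "nbrs (gadgetV W1 W2) (gadgetE F1 q1 F2 q2) v'"
  let ?h1 = "\<lambda>u. if u \<in> gadget_parts V1 V2 then Some (parts_cr V1 E1 p1 V2 E2 p2 z r u) else None"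
  let ?h2 = "\<lambda>u. if u \<in> gadget_parts W1 W2 then Some (parts_cr W1 F1 q1 W2 F2 q2 z' r u) else None"
  have in_gadgetV: "?S1 \<subseteq> gadgetV V1 V2" "?S2 \<subseteq> gadgetV W1 W2" by (rule nbrs_subset)+
  have no_Pend: "Pend \<notin> ?S1" "Pend \<notin> ?S2"
    using nbr_of_gadget_part[OF g1 v, of Pend] nbr_of_gadget_part[OF g2 v', of Pend] by auto
  have "image_mset (gadget_cr V1 E1 p1 V2 E2 p2 z m') (mset_set ?S1)
      = image_mset (gadget_cr W1 F1 q1 W2 F2 q2 z' m') (mset_set ?S2)"
    using Suc.prems(6) m(1) by simp
  hence "image_mset (parts_view r V1 E1 p1 V2 E2 p2 z) (mset_set ?S1)
       = image_mset (parts_view r W1 F1 q1 W2 F2 q2 z') (mset_set ?S2)"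
  proof (rule image_mset_eq_if_refines[OF finite_gadget_nbrs[OF g1] finite_gadget_nbrs[OF g2]])
    show "parts_view r V1 E1 p1 V2 E2 p2 z a = parts_view r V1 E1 p1 V2 E2 p2 z b"
      if "a \<in> ?S1" "b \<in> ?S1" "gadget_cr V1 E1 p1 V2 E2 p2 z m' a = gadget_cr V1 E1 p1 V2 E2 p2 z m' b" for a b
      using that in_gadgetV by (intro parts_view_eq[OF g1 g1 _ _ m2 Suc.IH[OF g1 g1 _ _ m(2)]]) auto
    show "parts_view r V1 E1 p1 V2 E2 p2 z a = parts_view r W1 F1 q1 W2 F2 q2 z' b"
      if "a \<in> ?S1" "b \<in> ?S2" "gadget_cr V1 E1 p1 V2 E2 p2 z m' a = gadget_cr W1 F1 q1 W2 F2 q2 z' m' b" for a b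
      using that in_gadgetV by (intro parts_view_eq[OF g1 g2 _ _ m2 Suc.IH[OF g1 g2 _ _ m(2)]]) auto
    show "parts_view r W1 F1 q1 W2 F2 q2 z' a = parts_view r W1 F1 q1 W2 F2 q2 z' b"
      if "a \<in> ?S2" "b \<in> ?S2" "gadget_cr W1 F1 q1 W2 F2 q2 z' m' a = gadget_cr W1 F1 q1 W2 F2 q2 z' m' b" for a b
      using that in_gadgetV by (intro parts_view_eq[OF g2 g2 _ _ m2 Suc.IH[OF g2 g2 _ _ m(2)]]) auto
  qed
  moreover have "image_mset (parts_view r V1 E1 p1 V2 E2 p2 z) (mset_set ?S1) = image_mset ?h1 (mset_set ?S1)"
    "image_mset (parts_view r W1 F1 q1 W2 F2 q2 z') (mset_set ?S2) = image_mset ?h2 (mset_set ?S2)"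
    using no_Pend by (auto intro!: image_mset_cong simp: parts_view_def finite_gadget_nbrs[OF g1] finite_gadget_nbrs[OF g2])
  ultimately have "image_mset the (filter_mset (\<lambda>ob. ob \<noteq> None) (image_mset ?h1 (mset_set ?S1)))
      = image_mset the (filter_mset (\<lambda>ob. ob \<noteq> None) (image_mset ?h2 (mset_set ?S2)))"
    by (simp only:)
  hence "image_mset (parts_cr V1 E1 p1 V2 E2 p2 z r) (mset_set (?S1 \<inter> gadget_parts V1 V2))
       = image_mset (parts_cr W1 F1 q1 W2 F2 q2 z' r) (mset_set (?S2 \<inter> gadget_parts W1 W2))"
    by (simp only: image_mset_the_filter_partial[OF finite_gadget_nbrs[OF g1]]
        image_mset_the_filter_partial[OF finite_gadget_nbrs[OF g2]])
  hence "image_mset (parts_cr V1 E1 p1 V2 E2 p2 z r) (mset_set (nbrs (gadget_parts V1 V2) (gadgetE E1 p1 E2 p2) v))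
       = image_mset (parts_cr W1 F1 q1 W2 F2 q2 z' r) (mset_set (nbrs (gadget_parts W1 W2) (gadgetE F1 q1 F2 q2) v'))"
    by (simp only: nbrs_Int_subset[OF gadget_parts_subset])
  moreover have "parts_cr V1 E1 p1 V2 E2 p2 z r v = parts_cr W1 F1 q1 W2 F2 q2 z' r v'"
    using Suc.IH[OF g1 g2 v v' _ Suc.prems(6)] Suc.prems(5) by simp
  ultimately show ?case by simp
qed

lemma gadget_cr_mset_eq_imp_parts_cr_mset_eq:
  assumes g1: "regular_gadget d (V1::'a set) E1 p1 V2 E2 p2 z" and g2: "regular_gadget d (W1::'a set) F1 q1 W2 F2 q2 z'"
    and m: "r + 2 \<le> m"
    and eq: "image_mset (gadget_cr V1 E1 p1 V2 E2 p2 z m) (mset_set (gadgetV V1 V2))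
           = image_mset (gadget_cr W1 F1 q1 W2 F2 q2 z' m) (mset_set (gadgetV W1 W2))"
  shows "image_mset (parts_cr V1 E1 p1 V2 E2 p2 z r) (mset_set (gadget_parts V1 V2))
       = image_mset (parts_cr W1 F1 q1 W2 F2 q2 z' r) (mset_set (gadget_parts W1 W2))"
proof -
  have m2: "2 \<le> m" using m by simp
  have fin: "finite V1" "finite V2" "finite W1" "finite W2"
    using regular_gadgetD(1,2)[OF g1] regular_gadgetD(1,2)[OF g2] simple_graph_finite by blast+
  have views: "image_mset (parts_view r V1 E1 p1 V2 E2 p2 z) (mset_set (gadgetV V1 V2))
      = image_mset (parts_view r W1 F1 q1 W2 F2 q2 z') (mset_set (gadgetV W1 W2))"
  proof (rule image_mset_eq_if_refines[OF finite_gadgetV[OF g1] finite_gadgetV[OF g2] eq])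
    show "parts_view r V1 E1 p1 V2 E2 p2 z a = parts_view r V1 E1 p1 V2 E2 p2 z b"
      if "a \<in> gadgetV V1 V2" "b \<in> gadgetV V1 V2" "gadget_cr V1 E1 p1 V2 E2 p2 z m a = gadget_cr V1 E1 p1 V2 E2 p2 z m b" for a b
      using that by (intro parts_view_eq[OF g1 g1 _ _ m2 gadget_cr_eq_imp_parts_cr_eq[OF g1 g1 _ _ m]])
    show "parts_view r V1 E1 p1 V2 E2 p2 z a = parts_view r W1 F1 q1 W2 F2 q2 z' b"
      if "a \<in> gadgetV V1 V2" "b \<in> gadgetV W1 W2" "gadget_cr V1 E1 p1 V2 E2 p2 z m a = gadget_cr W1 F1 q1 W2 F2 q2 z' m b" for a b
      using that by (intro parts_view_eq[OF g1 g2 _ _ m2 gadget_cr_eq_imp_parts_cr_eq[OF g1 g2 _ _ m]])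
    show "parts_view r W1 F1 q1 W2 F2 q2 z' a = parts_view r W1 F1 q1 W2 F2 q2 z' b"
      if "a \<in> gadgetV W1 W2" "b \<in> gadgetV W1 W2" "gadget_cr W1 F1 q1 W2 F2 q2 z' m a = gadget_cr W1 F1 q1 W2 F2 q2 z' m b" for a b
      using that by (intro parts_view_eq[OF g2 g2 _ _ m2 gadget_cr_eq_imp_parts_cr_eq[OF g2 g2 _ _ m]])
  qed
  have view_mset: "image_mset (parts_view r X1 G1 s1 X2 G2 s2 x) (mset_set (gadgetV X1 X2))
      = image_mset Some (image_mset (parts_cr X1 G1 s1 X2 G2 s2 x r) (mset_set (gadget_parts X1 X2)))
        + {#None, Some (lone_port_colour r)#}"
    if "finite X1" "finite X2" for X1 G1 s1 X2 G2 s2 x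
    unfolding mset_set_gadgetV[OF that] image_mset.compositionality
    by (auto intro!: image_mset_cong simp: parts_view_def that gadget_parts_def)
  have "image_mset Some (image_mset (parts_cr V1 E1 p1 V2 E2 p2 z r) (mset_set (gadget_parts V1 V2)))
      = image_mset Some (image_mset (parts_cr W1 F1 q1 W2 F2 q2 z' r) (mset_set (gadget_parts W1 W2)))"
    using views unfolding view_mset[OF fin(1,2)] view_mset[OF fin(3,4)] by simp
  hence "image_mset the (image_mset Some (image_mset (parts_cr V1 E1 p1 V2 E2 p2 z r) (mset_set (gadget_parts V1 V2))))
      = image_mset the (image_mset Some (image_mset (parts_cr W1 F1 q1 W2 F2 q2 z' r) (mset_set (gadget_parts W1 W2))))"
    by (rule arg_cong)
  thus ?thesis by (simp add: image_mset.compositionality comp_def)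
qed

lemma parts_cr_mset_L:
  assumes "regular_gadget d V1 E1 p1 V2 E2 p2 (L u)"
  shows "image_mset (parts_cr V1 E1 p1 V2 E2 p2 (L u) r) (mset_set (gadget_parts V1 V2))
       = image_mset (cr V1 E1 (indiv_port p1 u) r) (mset_set V1) + image_mset (cr V2 E2 (port_colour p2) r) (mset_set V2)"
  using parts_cr_mset[OF assms] by (simp add: parts_colour_simps cong del: image_mset_cong)

lemma parts_cr_mset_R:
  assumes "regular_gadget d V1 E1 p1 V2 E2 p2 (R u)"
  shows "image_mset (parts_cr V1 E1 p1 V2 E2 p2 (R u) r) (mset_set (gadget_parts V1 V2))
       = image_mset (cr V2 E2 (indiv_port p2 u) r) (mset_set V2) + image_mset (cr V1 E1 (port_colour p1) r) (mset_set V1)"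
  using parts_cr_mset[OF assms] by (simp add: parts_colour_simps add.commute cong del: image_mset_cong)

theorem claim1:
  fixes VA VB :: "'a set" and EA EB :: "'a \<Rightarrow> 'a \<Rightarrow> bool" and a1 b1 :: 'a
    and n d lam mu :: nat
    and x y :: "'a gv" and u w :: 'a
    and CV :: "'a set" and CE :: "'a \<Rightarrow> 'a \<Rightarrow> bool" and c1 :: 'a
  assumes "strongly_regular VA EA n d lam mu"
    and "strongly_regular VB EB n d lam mu"
    and "a1 \<in> VA" and "b1 \<in> VB"
    and "(x = L u \<and> u \<in> VA \<and> CV = VA \<and> CE = EA \<and> c1 = a1)
       \<or> (x = R u \<and> u \<in> VB \<and> CV = VB \<and> CE = EB \<and> c1 = b1)"
    and "(y = L w \<or> y = R w) \<and> w \<in> VA"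
    and "WL1 CV CE (indiv_port c1 u) \<noteq> WL1 VA EA (indiv_port a1 w)"
  shows "WL1 (gadgetV VA VB) (gadgetE EA a1 EB b1) (indiv x)
       \<noteq> WL1 (gadgetV VA VA) (gadgetE EA a1 EA a1) (indiv y)"
proof
  assume WL_eq: "WL1 (gadgetV VA VB) (gadgetE EA a1 EB b1) (indiv x)
       = WL1 (gadgetV VA VA) (gadgetE EA a1 EA a1) (indiv y)"
  let ?port_mset = "{#srg_port_colour d lam mu n 0#} + replicate_mset d (srg_port_colour d lam mu n 1)
                    + replicate_mset (n - 1 - d) (srg_port_colour d lam mu n 2)"
  have sg: "simple_graph VA EA" "simple_graph VB EB" and card: "card VA = n" "card VB = n"
    using assms(1,2) unfolding strongly_regular_def by auto
  have gx: "regular_gadget d VA EA a1 VB EB b1 x" and gy: "regular_gadget d VA EA a1 VA EA a1 y"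
    using assms(1-6) unfolding regular_gadget_def strongly_regular_def gadget_parts_def by auto
  have "card (gadgetV VA VB) = 2 * n + 2" "card (gadgetV VA VA) = 2 * n + 2"
    using card_gadgetV[OF simple_graph_finite[OF sg(1)] simple_graph_finite[OF sg(2)]]
      card_gadgetV[OF simple_graph_finite[OF sg(1)] simple_graph_finite[OF sg(1)]] card by simp_all
  hence "image_mset (parts_cr VA EA a1 VB EB b1 x n) (mset_set (gadget_parts VA VB))
       = image_mset (parts_cr VA EA a1 VA EA a1 y n) (mset_set (gadget_parts VA VA))"
    using WL_eq unfolding WL1_def by (intro gadget_cr_mset_eq_imp_parts_cr_mset_eq[OF gx gy]) simp_all
  moreover have "image_mset (parts_cr VA EA a1 VB EB b1 x n) (mset_set (gadget_parts VA VB))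
      = WL1 CV CE (indiv_port c1 u) + ?port_mset"
    using assms(5) gx card unfolding WL1_def
    by (auto simp: parts_cr_mset_L parts_cr_mset_R srg_cr_port_mset[OF assms(1,3)] srg_cr_port_mset[OF assms(2,4)])
  moreover have "image_mset (parts_cr VA EA a1 VA EA a1 y n) (mset_set (gadget_parts VA VA))
      = WL1 VA EA (indiv_port a1 w) + ?port_mset"
    using assms(6) gy card unfolding WL1_def
    by (auto simp: parts_cr_mset_L parts_cr_mset_R srg_cr_port_mset[OF assms(1,3)])
  ultimately show False using assms(7) by simp
qed

end
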